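(* Let $1\le k<n$ and $A\in\mathbb{M}_n$. The following are equivalent: (a) $A=\gamma I$ for some $\gamma\in\mathbb{C}$; (b) $A\parallel B$ for every $B\in\mathbb{M}_n$; (c) $A\parallel P$ for every rank-$k$ orthogonal projection $P\in\mathbb{M}_n$.
   Context: For $A\in\mathbb{M}_n$: $w_k(A)=\max\{|\operatorname{tr}(AP)|: P=P^*=P^2,\operatorname{tr}P=k\}$. $A\parallel B$ means $w_k(A+\mu B)=w_k(A)+w_k(B)$ for some $\mu\in\mathbb{C}$ with $|\mu|=1$. *)

theory Defs
  imports "Jordan_Normal_Form.Schur_Decomposition" "Jordan_Normal_Form.DL_Rank"
begin

definition mtrace :: "'a::comm_ring_1 mat \<Rightarrow> 'a" where
  "mtrace A = (\<Sum>i<dim_row A. A $$ (i, i))"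

definition orth_proj :: "nat \<Rightarrow> complex mat \<Rightarrow> bool" where
  "orth_proj n P \<longleftrightarrow> P \<in> carrier_mat n n \<and> mat_adjoint P = P \<and> P * P = P"

definition wk :: "nat \<Rightarrow> nat \<Rightarrow> complex mat \<Rightarrow> real" where
  "wk n k A = Sup {cmod (mtrace (A * P)) | P. orth_proj n P \<and> mtrace P = of_nat k}"

definition wk_parallel :: "nat \<Rightarrow> nat \<Rightarrow> complex mat \<Rightarrow> complex mat \<Rightarrow> bool" where
  "wk_parallel n k A B \<longleftrightarrow>
     (\<exists>\<mu>::complex. cmod \<mu> = 1 \<and> wk n k (A + \<mu> \<cdot>\<^sub>m B) = wk n k A + wk n k B)"

end

theory Submission
  imports Defs "HOL-Analysis.Topology_Euclidean_Space"
begin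

(*
  (a) \<Longrightarrow> (b): tr ((\<gamma> I + \<mu> B) Q) = \<gamma> k + \<mu> tr (B Q).  The closure of the k-numerical range
  {tr (B Q)} contains a point of modulus w_k(B), and choosing \<mu> so that \<mu> times this point
  points in the direction of \<gamma> gives w_k(\<gamma> I + \<mu> B) = |\<gamma>| k + w_k(B).

  (c) \<Longrightarrow> (a): if A \<parallel> P for a rank-k projection P, then |tr (A P)| = w_k(A); otherwise projections Q
  near P have |tr (A Q)| bounded away from w_k(A), and projections far from P have tr (P Q) bounded
  away from k, so w_k(A + \<mu> P) < w_k(A) + k.  Taking P = diag(S) + x x\<^sup>* with x a unit vector
  supported on two coordinates p, q outside S, |c + x\<^sup>* A x| is constant on the unit sphere of \<complex>\<^sup>2.
  In Bloch coordinates x\<^sup>* A x is an affine function on the 2-sphere whose linear part consists of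
  three vectors of \<real>\<^sup>2 \<cong> \<complex>; constancy of its modulus forces them to be orthogonal of equal
  length, hence zero, i.e. A is scalar on the coordinates {p, q}.
*)

section \<open>Traces, adjoints and the Frobenius norm\<close>

lemma mtrace_carrier: "A \<in> carrier_mat n n \<Longrightarrow> mtrace A = (\<Sum>i<n. A $$ (i,i))"
  unfolding mtrace_def by auto

lemma index_mult_mat_sum:
  assumes "A \<in> carrier_mat n m" "B \<in> carrier_mat m p" "i < n" "j < p"
  shows "(A * B) $$ (i,j) = (\<Sum>l<m. A $$ (i,l) * B $$ (l,j))"
  using assms by (auto simp: scalar_prod_def atLeast0LessThan intro!: sum.cong)

lemma mtrace_mult:
  assumes "A \<in> carrier_mat n n" "B \<in> carrier_mat n n"
  shows "mtrace (A * B) = (\<Sum>i<n. \<Sum>j<n. A $$ (i,j) * B $$ (j,i))"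
  using assms unfolding mtrace_def
  by (auto simp: scalar_prod_def atLeast0LessThan intro!: sum.cong)

lemma mtrace_mult_comm:
  assumes "A \<in> carrier_mat n n" "B \<in> carrier_mat n n"
  shows "mtrace (A * B) = mtrace (B * A)"
  unfolding mtrace_mult[OF assms] mtrace_mult[OF assms(2,1)]
  by (subst sum.swap) (simp add: mult.commute)

lemma mtrace_add_smult_mult:
  assumes "A \<in> carrier_mat n n" "B \<in> carrier_mat n n" "Q \<in> carrier_mat n n"
  shows "mtrace ((A + \<mu> \<cdot>\<^sub>m B) * Q) = mtrace (A * Q) + \<mu> * mtrace (B * Q)"
proof -
  have "A + \<mu> \<cdot>\<^sub>m B \<in> carrier_mat n n" using assms by simp
  then have "mtrace ((A + \<mu> \<cdot>\<^sub>m B) * Q) = (\<Sum>i<n. \<Sum>j<n. (A + \<mu> \<cdot>\<^sub>m B) $$ (i,j) * Q $$ (j,i))"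
    using assms(3) by (rule mtrace_mult)
  also have "\<dots> = (\<Sum>i<n. \<Sum>j<n. A $$ (i,j) * Q $$ (j,i) + \<mu> * (B $$ (i,j) * Q $$ (j,i)))"
    using assms by (intro sum.cong refl) (simp add: distrib_right)
  finally show ?thesis
    unfolding mtrace_mult[OF assms(1,3)] mtrace_mult[OF assms(2,3)]
    by (simp only: sum.distrib sum_distrib_left)
qed

lemma mtrace_smult_one_mult:
  assumes "Q \<in> carrier_mat n n"
  shows "mtrace ((\<gamma> \<cdot>\<^sub>m 1\<^sub>m n) * Q) = \<gamma> * mtrace Q"
proof -
  have "(\<gamma> \<cdot>\<^sub>m 1\<^sub>m n) * Q = \<gamma> \<cdot>\<^sub>m Q"
    using mult_smult_assoc_mat[OF one_carrier_mat assms] assms by simp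
  moreover have "mtrace (\<gamma> \<cdot>\<^sub>m Q) = \<gamma> * mtrace Q"
    using assms mtrace_carrier[of "\<gamma> \<cdot>\<^sub>m Q" n] by (simp add: mtrace_carrier sum_distrib_left)
  ultimately show ?thesis by simp
qed

lemma dim_mat_adjoint [simp]:
  "dim_row (mat_adjoint A) = dim_col A" "dim_col (mat_adjoint A) = dim_row A"
  unfolding mat_adjoint_def by auto

lemma carrier_mat_adjoint: "A \<in> carrier_mat n m \<Longrightarrow> mat_adjoint A \<in> carrier_mat m n"
  unfolding mat_adjoint_def by auto

lemma index_mat_adjoint:
  "A \<in> carrier_mat n m \<Longrightarrow> i < m \<Longrightarrow> j < n \<Longrightarrow> mat_adjoint A $$ (i,j) = cnj (A $$ (j,i))"
  unfolding mat_adjoint_def by (auto simp: mat_of_rows_def)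

lemma mat_adjoint_mult:
  fixes A B :: "complex mat"
  assumes A: "A \<in> carrier_mat n n" and B: "B \<in> carrier_mat n n"
  shows "mat_adjoint (A * B) = mat_adjoint B * mat_adjoint A"
proof (rule eq_matI)
  have AB: "A * B \<in> carrier_mat n n" using A B by simp
  have aA: "mat_adjoint A \<in> carrier_mat n n" and aB: "mat_adjoint B \<in> carrier_mat n n"
    using carrier_mat_adjoint A B by auto
  fix i j assume "i < dim_row (mat_adjoint B * mat_adjoint A)" "j < dim_col (mat_adjoint B * mat_adjoint A)"
  then have i: "i < n" and j: "j < n" using aA aB by auto
  have "mat_adjoint (A * B) $$ (i, j) = cnj (\<Sum>l<n. A $$ (j,l) * B $$ (l,i))"
    by (simp add: index_mat_adjoint[OF AB i j] index_mult_mat_sum[OF A B j i])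
  also have "\<dots> = (\<Sum>l<n. mat_adjoint B $$ (i,l) * mat_adjoint A $$ (l,j))"
    using i j by (auto simp: index_mat_adjoint[OF A] index_mat_adjoint[OF B] intro!: sum.cong)
  also have "\<dots> = (mat_adjoint B * mat_adjoint A) $$ (i, j)"
    by (rule index_mult_mat_sum[OF aB aA i j, symmetric])
  finally show "mat_adjoint (A * B) $$ (i, j) = (mat_adjoint B * mat_adjoint A) $$ (i, j)" .
qed (use A B carrier_mat_adjoint in auto)

definition frobenius_sq :: "complex mat \<Rightarrow> real" where
  "frobenius_sq M = (\<Sum>i<dim_row M. \<Sum>j<dim_col M. (cmod (M $$ (i,j)))^2)"

definition entry_norm_sum :: "complex mat \<Rightarrow> real" where
  "entry_norm_sum M = (\<Sum>i<dim_row M. \<Sum>j<dim_col M. cmod (M $$ (i,j)))"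

lemma frobenius_sq_nonneg: "0 \<le> frobenius_sq M"
  unfolding frobenius_sq_def by (intro sum_nonneg) auto

lemma entry_norm_sum_nonneg: "0 \<le> entry_norm_sum M"
  unfolding entry_norm_sum_def by (intro sum_nonneg) auto

lemma mtrace_adjoint_mult_self:
  assumes M: "M \<in> carrier_mat n n"
  shows "mtrace (mat_adjoint M * M) = of_real (frobenius_sq M)"
proof -
  have "mtrace (mat_adjoint M * M) = (\<Sum>i<n. \<Sum>j<n. cnj (M $$ (j,i)) * M $$ (j,i))"
    using M carrier_mat_adjoint[OF M] by (simp add: mtrace_mult index_mat_adjoint)
  also have "\<dots> = (\<Sum>i<n. \<Sum>j<n. M $$ (i,j) * cnj (M $$ (i,j)))"
    by (subst sum.swap) (simp add: mult.commute)
  also have "\<dots> = of_real (frobenius_sq M)"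
    using M unfolding frobenius_sq_def by (simp only: carrier_matD of_real_sum complex_norm_square)
  finally show ?thesis .
qed

lemma norm_index_le_sqrt_frobenius_sq:
  assumes "i < dim_row M" "j < dim_col M"
  shows "cmod (M $$ (i,j)) \<le> sqrt (frobenius_sq M)"
proof -
  have "(cmod (M $$ (i,j)))^2 \<le> (\<Sum>j<dim_col M. (cmod (M $$ (i,j)))^2)"
    using assms by (intro member_le_sum) auto
  also have "\<dots> \<le> frobenius_sq M"
    unfolding frobenius_sq_def using assms
    by (intro member_le_sum[where f = "\<lambda>i. \<Sum>j<dim_col M. (cmod (M $$ (i,j)))^2"]) (auto intro: sum_nonneg)
  finally show ?thesis by (rule real_le_rsqrt)
qed

lemma frobenius_sq_diff:
  assumes M: "M \<in> carrier_mat n n" and N: "N \<in> carrier_mat n n"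
  shows "frobenius_sq (M - N)
    = frobenius_sq M + frobenius_sq N - 2 * Re (mtrace (mat_adjoint M * N))"
proof -
  have entry: "(cmod (a - b))^2 = (cmod a)^2 + (cmod b)^2 - 2 * Re (cnj a * b)" for a b :: complex
    unfolding cmod_power2 by (simp add: power2_eq_square algebra_simps)
  have "mtrace (mat_adjoint M * N) = (\<Sum>i<n. \<Sum>j<n. cnj (M $$ (j,i)) * N $$ (j,i))"
    using M N carrier_mat_adjoint[OF M] by (simp add: mtrace_mult index_mat_adjoint)
  also have "\<dots> = (\<Sum>i<n. \<Sum>j<n. cnj (M $$ (i,j)) * N $$ (i,j))"
    by (rule sum.swap)
  finally show ?thesis
    using M N by (simp add: frobenius_sq_def entry sum.distrib sum_subtractf sum_distrib_left)
qed

lemma norm_mtrace_mult_le: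
  assumes X: "X \<in> carrier_mat n n" and Y: "Y \<in> carrier_mat n n"
    and bound: "\<And>i j. i < n \<Longrightarrow> j < n \<Longrightarrow> cmod (Y $$ (i,j)) \<le> b"
  shows "cmod (mtrace (X * Y)) \<le> entry_norm_sum X * b"
proof -
  have "cmod (mtrace (X * Y)) \<le> (\<Sum>i<n. \<Sum>j<n. cmod (X $$ (i,j) * Y $$ (j,i)))"
    unfolding mtrace_mult[OF X Y] by (rule order_trans[OF norm_sum]) (intro sum_mono norm_sum)
  also have "\<dots> \<le> (\<Sum>i<n. \<Sum>j<n. cmod (X $$ (i,j)) * b)"
    using bound by (intro sum_mono) (auto simp: norm_mult intro: mult_left_mono)
  also have "\<dots> = entry_norm_sum X * b"
    using X by (simp add: entry_norm_sum_def sum_distrib_right)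
  finally show ?thesis .
qed

lemma norm_mtrace_mult_diff_le:
  assumes X: "X \<in> carrier_mat n n" and Y: "Y \<in> carrier_mat n n" and Z: "Z \<in> carrier_mat n n"
  shows "cmod (mtrace (X * Y) - mtrace (X * Z)) \<le> entry_norm_sum X * sqrt (frobenius_sq (Y - Z))"
proof -
  have YZ: "Y - Z \<in> carrier_mat n n" using Z by (rule minus_carrier_mat)
  have "mtrace (X * Y) - mtrace (X * Z) = mtrace (X * (Y - Z))"
    unfolding mtrace_mult[OF X Y] mtrace_mult[OF X Z] mtrace_mult[OF X YZ] sum_subtractf[symmetric]
    using Y Z by (intro sum.cong refl) (simp add: right_diff_distrib)
  also have "cmod \<dots> \<le> entry_norm_sum X * sqrt (frobenius_sq (Y - Z))"
    using YZ by (intro norm_mtrace_mult_le[OF X YZ] norm_index_le_sqrt_frobenius_sq) auto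
  finally show ?thesis .
qed

lemma frobenius_sq_orth_proj: "orth_proj n P \<Longrightarrow> of_real (frobenius_sq P) = mtrace P"
  unfolding orth_proj_def using mtrace_adjoint_mult_self by metis

lemma norm_index_orth_proj_le:
  assumes P: "orth_proj n P" and tr: "mtrace P = of_nat k" and "i < n" "j < n"
  shows "cmod (P $$ (i,j)) \<le> sqrt k"
proof -
  have "frobenius_sq P = k" using frobenius_sq_orth_proj[OF P] tr by (metis of_real_eq_iff of_real_of_nat_eq)
  then show ?thesis
    using norm_index_le_sqrt_frobenius_sq[of i P j] assms orth_proj_def by auto
qed

lemma mtrace_orth_proj_mult:
  assumes P: "orth_proj n P" and Q: "orth_proj n Q"
    and trP: "mtrace P = of_nat k" and trQ: "mtrace Q = of_nat k"
  shows "mtrace (P * Q) = of_real (real k - frobenius_sq (P - Q) / 2)"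
    and "frobenius_sq (P - Q) \<le> 2 * real k"
proof -
  have Pc: "P \<in> carrier_mat n n" and PP: "P * P = P" and aP: "mat_adjoint P = P"
    using P unfolding orth_proj_def by auto
  have Qc: "Q \<in> carrier_mat n n" and QQ: "Q * Q = Q" and aQ: "mat_adjoint Q = Q"
    using Q unfolding orth_proj_def by auto
  have QP: "Q * P \<in> carrier_mat n n" using Pc Qc by simp
  have "(P * Q) * (Q * P) = P * ((Q * Q) * P)"
    using Pc Qc by (simp add: assoc_mult_mat[of _ n n _ n _ n])
  then have "mtrace ((P * Q) * (Q * P)) = mtrace ((Q * P) * P)"
    using mtrace_mult_comm[OF Pc QP] QQ by simp
  also have "\<dots> = mtrace (P * Q)"
    using Pc Qc PP mtrace_mult_comm[OF Qc Pc] by (simp add: assoc_mult_mat[of _ n n _ n _ n])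
  finally have r: "mtrace (P * Q) = of_real (frobenius_sq (Q * P))"
    using mtrace_adjoint_mult_self[OF QP] mat_adjoint_mult[OF Qc Pc] aP aQ by simp
  have "frobenius_sq P = k" "frobenius_sq Q = k"
    using frobenius_sq_orth_proj[OF P] frobenius_sq_orth_proj[OF Q] trP trQ
    by (metis of_real_eq_iff of_real_of_nat_eq)+
  then have F: "frobenius_sq (P - Q) = 2 * k - 2 * frobenius_sq (Q * P)"
    using frobenius_sq_diff[OF Pc Qc] r aP by simp
  have "real k - frobenius_sq (P - Q) / 2 = frobenius_sq (Q * P)" using F by (simp add: field_simps)
  then show "mtrace (P * Q) = of_real (real k - frobenius_sq (P - Q) / 2)" using r by simp
  show "frobenius_sq (P - Q) \<le> 2 * real k" using F frobenius_sq_nonneg[of "Q * P"] by simp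
qed

section \<open>The \<open>k\<close>-numerical range and radius\<close>

lemma norm_le_Sup_norm_if_in_closure:
  fixes Z :: "'a::real_normed_vector set"
  assumes "bounded Z" and l: "l \<in> closure Z"
  shows "norm l \<le> Sup (norm ` Z)"
proof (rule field_le_epsilon)
  have bdd: "bdd_above (norm ` Z)"
    using assms(1) unfolding bounded_iff bdd_above_def by auto
  fix e :: real assume "0 < e"
  then obtain z where "z \<in> Z" "dist z l < e" using l closure_approachable by blast
  then have "norm l \<le> norm z + e" "norm z \<le> Sup (norm ` Z)"
    using cSup_upper[OF _ bdd] norm_triangle_sub[of l z] by (auto simp: dist_norm norm_minus_commute)
  then show "norm l \<le> Sup (norm ` Z) + e" by linarith
qed

lemma Sup_norm_attained_in_closure:
  fixes Z :: "'a::{heine_borel, real_normed_vector} set"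
  assumes "bounded Z" "Z \<noteq> {}"
  obtains l where "l \<in> closure Z" "norm l = Sup (norm ` Z)"
proof -
  obtain l where l: "l \<in> closure Z" and max: "\<And>z. z \<in> closure Z \<Longrightarrow> norm z \<le> norm l"
    using continuous_attains_sup[of "closure Z" norm] assms by (auto intro: continuous_intros)
  have "Sup (norm ` Z) \<le> norm l"
    using assms(2) max closure_subset by (intro cSup_least) auto
  then show ?thesis using that l norm_le_Sup_norm_if_in_closure[OF assms(1) l] by simp
qed

definition knum_range :: "nat \<Rightarrow> nat \<Rightarrow> complex mat \<Rightarrow> complex set" where
  "knum_range n k X = {mtrace (X * P) | P. orth_proj n P \<and> mtrace P = of_nat k}"

lemma wk_knum_range: "wk n k X = Sup (norm ` knum_range n k X)"
  unfolding wk_def knum_range_def by (rule arg_cong[where f = Sup]) auto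

lemma bounded_knum_range:
  assumes X: "X \<in> carrier_mat n n"
  shows "bounded (knum_range n k X)"
  unfolding bounded_iff knum_range_def
proof (intro exI ballI, clarify)
  fix P assume P: "orth_proj n P" and tr: "mtrace P = of_nat k"
  show "cmod (mtrace (X * P)) \<le> entry_norm_sum X * sqrt k"
    using P by (intro norm_mtrace_mult_le[OF X] norm_index_orth_proj_le[OF P tr]) (auto simp: orth_proj_def)
qed

definition diag_proj :: "nat \<Rightarrow> nat set \<Rightarrow> complex mat" where
  "diag_proj n S = Matrix.mat n n (\<lambda>(i,j). if i = j \<and> i \<in> S then 1 else 0)"

lemma diag_proj_carrier [simp]: "diag_proj n S \<in> carrier_mat n n"
  unfolding diag_proj_def by simp

lemma orth_proj_diag_proj: "orth_proj n (diag_proj n S)"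
proof -
  have "mat_adjoint (diag_proj n S) = diag_proj n S"
    by (rule eq_matI) (auto simp: index_mat_adjoint[of _ n n] diag_proj_def)
  moreover have "diag_proj n S * diag_proj n S = diag_proj n S"
  proof (rule eq_matI)
    fix i j assume "i < dim_row (diag_proj n S)" "j < dim_col (diag_proj n S)"
    then have ij: "i < n" "j < n" by (auto simp: diag_proj_def)
    have "(diag_proj n S * diag_proj n S) $$ (i, j)
        = (\<Sum>l<n. diag_proj n S $$ (i,l) * diag_proj n S $$ (l,j))"
      using ij by (intro index_mult_mat_sum) auto
    also have "\<dots> = (\<Sum>l<n. if l = i then diag_proj n S $$ (i,j) else 0)"
      using ij by (intro sum.cong) (auto simp: diag_proj_def)
    finally show "(diag_proj n S * diag_proj n S) $$ (i, j) = diag_proj n S $$ (i, j)"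
      using ij by simp
  qed (auto simp: diag_proj_def)
  ultimately show ?thesis unfolding orth_proj_def by simp
qed

lemma mtrace_diag_proj: "S \<subseteq> {..<n} \<Longrightarrow> mtrace (diag_proj n S) = of_nat (card S)"
  by (simp add: mtrace_carrier[of _ n] diag_proj_def sum.If_cases Int_absorb1)

lemma norm_le_wk_if_in_closure:
  "X \<in> carrier_mat n n \<Longrightarrow> l \<in> closure (knum_range n k X) \<Longrightarrow> cmod l \<le> wk n k X"
  unfolding wk_knum_range by (rule norm_le_Sup_norm_if_in_closure[OF bounded_knum_range])

lemma norm_mtrace_le_wk:
  assumes "X \<in> carrier_mat n n" "orth_proj n Q" "mtrace Q = of_nat k"
  shows "cmod (mtrace (X * Q)) \<le> wk n k X"
  using assms by (intro norm_le_wk_if_in_closure[OF assms(1)] closure_subset[THEN subsetD])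
    (auto simp: knum_range_def)

lemma knum_range_nonempty: "k \<le> n \<Longrightarrow> knum_range n k X \<noteq> {}"
  using orth_proj_diag_proj[of n "{..<k}"] mtrace_diag_proj[of "{..<k}" n]
  by (auto simp: knum_range_def)

lemma wk_le:
  assumes "k \<le> n"
    and "\<And>Q. orth_proj n Q \<Longrightarrow> mtrace Q = of_nat k \<Longrightarrow> cmod (mtrace (X * Q)) \<le> b"
  shows "wk n k X \<le> b"
  unfolding wk_knum_range using knum_range_nonempty[OF assms(1)] assms(2)
  by (intro cSup_least) (auto simp: knum_range_def)

lemma wk_add_smult_le:
  assumes "k \<le> n" and X: "X \<in> carrier_mat n n" and Y: "Y \<in> carrier_mat n n"
  shows "wk n k (X + \<mu> \<cdot>\<^sub>m Y) \<le> wk n k X + cmod \<mu> * wk n k Y"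
proof (rule wk_le[OF assms(1)])
  fix Q assume Q: "orth_proj n Q" "mtrace Q = of_nat k"
  then have Qc: "Q \<in> carrier_mat n n" by (simp add: orth_proj_def)
  have "cmod (mtrace ((X + \<mu> \<cdot>\<^sub>m Y) * Q)) \<le> cmod (mtrace (X * Q)) + cmod \<mu> * cmod (mtrace (Y * Q))"
    unfolding mtrace_add_smult_mult[OF X Y Qc] by (metis norm_mult norm_triangle_ineq)
  also have "\<dots> \<le> wk n k X + cmod \<mu> * wk n k Y"
    using norm_mtrace_le_wk[OF X Q] norm_mtrace_le_wk[OF Y Q] by (simp add: add_mono mult_left_mono)
  finally show "cmod (mtrace ((X + \<mu> \<cdot>\<^sub>m Y) * Q)) \<le> wk n k X + cmod \<mu> * wk n k Y" .
qed

lemma wk_smult_one: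
  assumes "k \<le> n"
  shows "wk n k (\<gamma> \<cdot>\<^sub>m 1\<^sub>m n) = cmod \<gamma> * k"
proof (rule antisym)
  have trace_value: "cmod (mtrace ((\<gamma> \<cdot>\<^sub>m 1\<^sub>m n) * Q)) = cmod \<gamma> * k"
    if "orth_proj n Q" "mtrace Q = of_nat k" for Q
    using that by (simp add: mtrace_smult_one_mult orth_proj_def norm_mult)
  show "wk n k (\<gamma> \<cdot>\<^sub>m 1\<^sub>m n) \<le> cmod \<gamma> * k"
    using assms trace_value by (intro wk_le) auto
  show "cmod \<gamma> * k \<le> wk n k (\<gamma> \<cdot>\<^sub>m 1\<^sub>m n)"
    using norm_mtrace_le_wk[of "\<gamma> \<cdot>\<^sub>m 1\<^sub>m n" n "diag_proj n {..<k}" k]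
      trace_value[of "diag_proj n {..<k}"] orth_proj_diag_proj mtrace_diag_proj[of "{..<k}" n] assms
    by auto
qed

section \<open>Scalar matrices are parallel to every matrix\<close>

lemma complex_unit_factor:
  fixes z :: complex
  obtains u where "cmod u = 1" "z = u * of_real (cmod z)"
proof (cases "z = 0")
  case True
  then show ?thesis using that[of 1] by simp
next
  case False
  then show ?thesis using that[of "z / of_real (cmod z)"] by (simp add: norm_divide)
qed

lemma knum_range_smult_one_add_smult:
  assumes "B \<in> carrier_mat n n"
  shows "knum_range n k (\<gamma> \<cdot>\<^sub>m 1\<^sub>m n + \<mu> \<cdot>\<^sub>m B) = (\<lambda>z. \<gamma> * of_nat k + \<mu> * z) ` knum_range n k B"
proof -
  have trace: "mtrace ((\<gamma> \<cdot>\<^sub>m 1\<^sub>m n + \<mu> \<cdot>\<^sub>m B) * Q) = \<gamma> * of_nat k + \<mu> * mtrace (B * Q)"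
    if "orth_proj n Q" "mtrace Q = of_nat k" for Q
    using that assms mtrace_add_smult_mult[of "\<gamma> \<cdot>\<^sub>m 1\<^sub>m n" n B Q \<mu>] mtrace_smult_one_mult[of Q n \<gamma>]
    by (simp add: orth_proj_def)
  show ?thesis unfolding knum_range_def by (force simp: trace)
qed

lemma wk_parallel_smult_one:
  assumes k: "k \<le> n" and B: "B \<in> carrier_mat n n"
  shows "wk_parallel n k (\<gamma> \<cdot>\<^sub>m 1\<^sub>m n) B"
proof -
  obtain l where l: "l \<in> closure (knum_range n k B)" and norm_l: "cmod l = wk n k B"
    using Sup_norm_attained_in_closure[OF bounded_knum_range[OF B] knum_range_nonempty[OF k]]
    unfolding wk_knum_range by blast
  obtain g where g: "cmod g = 1" "\<gamma> = g * of_real (cmod \<gamma>)" by (rule complex_unit_factor)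
  obtain h where h: "cmod h = 1" "l = h * of_real (cmod l)" by (rule complex_unit_factor)
  define \<mu> where "\<mu> = g * cnj h"
  have \<mu>: "cmod \<mu> = 1" unfolding \<mu>_def using g h by (simp add: norm_mult)
  have "cnj h * h = 1" using h(1) by (metis complex_norm_square mult.commute of_real_1 power_one)
  then have rotate: "\<gamma> * of_nat k + \<mu> * l = g * of_real (cmod \<gamma> * k + cmod l)"
    unfolding \<mu>_def by (subst g(2), subst h(2)) (simp add: algebra_simps)
  have aligned: "cmod (\<gamma> * of_nat k + \<mu> * l) = wk n k (\<gamma> \<cdot>\<^sub>m 1\<^sub>m n) + wk n k B"
    unfolding wk_smult_one[OF k] norm_l[symmetric] rotate norm_mult g(1) norm_of_real by simp
  have "(\<lambda>z. \<gamma> * of_nat k + \<mu> * z) ` closure (knum_range n k B)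
      \<subseteq> closure ((\<lambda>z. \<gamma> * of_nat k + \<mu> * z) ` knum_range n k B)"
    by (rule continuous_image_closure_subset[of UNIV]) (auto intro: continuous_intros)
  then have "\<gamma> * of_nat k + \<mu> * l \<in> closure (knum_range n k (\<gamma> \<cdot>\<^sub>m 1\<^sub>m n + \<mu> \<cdot>\<^sub>m B))"
    unfolding knum_range_smult_one_add_smult[OF B] using l by blast
  then have "wk n k (\<gamma> \<cdot>\<^sub>m 1\<^sub>m n) + wk n k B \<le> wk n k (\<gamma> \<cdot>\<^sub>m 1\<^sub>m n + \<mu> \<cdot>\<^sub>m B)"
    using norm_le_wk_if_in_closure B unfolding aligned[symmetric] by simp
  moreover have "wk n k (\<gamma> \<cdot>\<^sub>m 1\<^sub>m n + \<mu> \<cdot>\<^sub>m B) \<le> wk n k (\<gamma> \<cdot>\<^sub>m 1\<^sub>m n) + wk n k B"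
    using wk_add_smult_le[OF k _ B, of "\<gamma> \<cdot>\<^sub>m 1\<^sub>m n" \<mu>] \<mu> by simp
  ultimately show ?thesis unfolding wk_parallel_def using \<mu> by (intro exI[of _ \<mu>]) simp
qed

section \<open>Parallelism to a projection forces attainment\<close>

lemma obtain_gap_sqrt:
  fixes \<eta> C :: real
  assumes "0 < \<eta>" "0 \<le> C"
  obtains \<delta> where "0 < \<delta>" "\<And>F. 0 \<le> F \<Longrightarrow> \<delta> \<le> F / 2 \<or> C * sqrt F \<le> \<eta> - \<delta>"
proof -
  define r where "r = \<eta> / (2 * (C + 1))"
  have r: "0 < r" "C * r \<le> \<eta> / 2"
    using assms by (auto simp: r_def field_simps)
  define \<delta> where "\<delta> = min (\<eta> / 2) (r^2 / 2)"
  have "\<delta> \<le> F / 2 \<or> C * sqrt F \<le> \<eta> - \<delta>" if "0 \<le> F" for F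
  proof (cases "\<delta> \<le> F / 2")
    case False
    then have "sqrt F < r" using r(1) by (auto simp: \<delta>_def intro: real_less_lsqrt)
    then have "C * sqrt F \<le> C * r" using assms(2) by (simp add: mult_left_mono)
    then show ?thesis using r(2) unfolding \<delta>_def by linarith
  qed simp
  moreover have "0 < \<delta>" using assms r by (simp add: \<delta>_def)
  ultimately show ?thesis using that by blast
qed

lemma norm_mtrace_add_smult_orth_proj_le:
  assumes A: "A \<in> carrier_mat n n" and \<mu>: "cmod \<mu> = 1"
    and P: "orth_proj n P" "mtrace P = of_nat k" and Q: "orth_proj n Q" "mtrace Q = of_nat k"
  defines "F \<equiv> frobenius_sq (P - Q)"
  shows "cmod (mtrace ((A + \<mu> \<cdot>\<^sub>m P) * Q)) \<le> wk n k A + (k - F / 2)"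
    and "cmod (mtrace ((A + \<mu> \<cdot>\<^sub>m P) * Q)) \<le> cmod (mtrace (A * P)) + entry_norm_sum A * sqrt F + (k - F / 2)"
proof -
  have Pc: "P \<in> carrier_mat n n" and Qc: "Q \<in> carrier_mat n n"
    using P(1) Q(1) by (simp_all add: orth_proj_def)
  have PQ: "mtrace (P * Q) = of_real (k - F / 2)" "F \<le> 2 * real k"
    using mtrace_orth_proj_mult[OF P(1) Q(1) P(2) Q(2)] unfolding F_def by auto
  have "cmod (mtrace ((A + \<mu> \<cdot>\<^sub>m P) * Q)) \<le> cmod (mtrace (A * Q)) + cmod (\<mu> * mtrace (P * Q))"
    unfolding mtrace_add_smult_mult[OF A Pc Qc] by (rule norm_triangle_ineq)
  also have "cmod (\<mu> * mtrace (P * Q)) = k - F / 2"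
    unfolding PQ(1) norm_mult \<mu> norm_of_real using PQ(2) by simp
  finally have "cmod (mtrace ((A + \<mu> \<cdot>\<^sub>m P) * Q)) \<le> cmod (mtrace (A * Q)) + (k - F / 2)" .
  moreover have "cmod (mtrace (A * Q)) \<le> wk n k A" by (rule norm_mtrace_le_wk[OF A Q])
  moreover have "cmod (mtrace (A * Q)) \<le> cmod (mtrace (A * P)) + entry_norm_sum A * sqrt F"
    using norm_mtrace_mult_diff_le[OF A Pc Qc] norm_triangle_sub[of "mtrace (A * Q)" "mtrace (A * P)"]
    unfolding F_def by (simp add: norm_minus_commute)
  ultimately show "cmod (mtrace ((A + \<mu> \<cdot>\<^sub>m P) * Q)) \<le> wk n k A + (k - F / 2)"
    and "cmod (mtrace ((A + \<mu> \<cdot>\<^sub>m P) * Q)) \<le> cmod (mtrace (A * P)) + entry_norm_sum A * sqrt F + (k - F / 2)"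
    by linarith+
qed

lemma norm_mtrace_eq_wk_if_parallel_orth_proj:
  assumes k: "k \<le> n" and A: "A \<in> carrier_mat n n"
    and P: "orth_proj n P" and trP: "mtrace P = of_nat k" and par: "wk_parallel n k A P"
  shows "cmod (mtrace (A * P)) = wk n k A"
proof (rule ccontr)
  define w where "w = wk n k A"
  assume "cmod (mtrace (A * P)) \<noteq> wk n k A"
  then have "0 < w - cmod (mtrace (A * P))"
    using norm_mtrace_le_wk[OF A P trP] unfolding w_def by linarith
  from obtain_gap_sqrt[OF this entry_norm_sum_nonneg] obtain \<delta> where \<delta>: "0 < \<delta>"
    and gap: "\<And>F. 0 \<le> F \<Longrightarrow> \<delta> \<le> F / 2 \<or> entry_norm_sum A * sqrt F \<le> w - cmod (mtrace (A * P)) - \<delta>"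
    by blast
  obtain \<mu> where \<mu>: "cmod \<mu> = 1" and eq: "wk n k (A + \<mu> \<cdot>\<^sub>m P) = w + wk n k P"
    using par unfolding wk_parallel_def w_def by blast
  have "real k \<le> wk n k P"
    using norm_mtrace_le_wk[of P n P k] P trP by (simp add: orth_proj_def)
  moreover have "wk n k (A + \<mu> \<cdot>\<^sub>m P) \<le> w + k - \<delta>"
  proof (rule wk_le[OF k])
    fix Q assume Q: "orth_proj n Q" "mtrace Q = of_nat k"
    show "cmod (mtrace ((A + \<mu> \<cdot>\<^sub>m P) * Q)) \<le> w + k - \<delta>"
      using norm_mtrace_add_smult_orth_proj_le[OF A \<mu> P trP Q] frobenius_sq_nonneg[of "P - Q"]
        gap[OF frobenius_sq_nonneg[of "P - Q"]]
      unfolding w_def by (elim disjE) linarith+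
  qed
  ultimately show False using eq \<delta> by linarith
qed

section \<open>Rank-\<open>k\<close> projections with a two-point rank-one part\<close>

definition outer_mat :: "nat \<Rightarrow> (nat \<Rightarrow> complex) \<Rightarrow> complex mat" where
  "outer_mat n x = Matrix.mat n n (\<lambda>(i,j). x i * cnj (x j))"

definition two_point_vec :: "nat \<Rightarrow> nat \<Rightarrow> complex \<Rightarrow> complex \<Rightarrow> nat \<Rightarrow> complex" where
  "two_point_vec p q a b i = (if i = p then a else if i = q then b else 0)"

lemma outer_mat_carrier [simp]: "outer_mat n x \<in> carrier_mat n n"
  unfolding outer_mat_def by simp

lemma rank_diag_proj_le: "finite S \<Longrightarrow> vec_space.rank n (diag_proj n S) \<le> card S"
proof (induction S rule: finite_induct)
  case empty
  have "diag_proj n {} = 0\<^sub>m n n" unfolding diag_proj_def by (rule eq_matI) auto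
  then show ?case using vec_space.rank_0I[of n n] by simp
next
  case (insert s S)
  have "diag_proj n (insert s S) = diag_proj n S + diag_proj n {s}"
    unfolding diag_proj_def by (rule eq_matI) (use insert in auto)
  then have "vec_space.rank n (diag_proj n (insert s S))
      \<le> vec_space.rank n (diag_proj n S) + vec_space.rank n (diag_proj n {s})"
    by (simp add: vec_space.rank_subadditive[of _ n n])
  moreover have "vec_space.rank n (diag_proj n {s}) \<le> 1"
    by (rule vec_space.rank_le_1_product_entries[of _ n n "\<lambda>r. if r = s then 1 else 0" "\<lambda>c. if c = s then 1 else 0"])
      (auto simp: diag_proj_def)
  ultimately show ?case using insert by simp
qed

lemma rank_diag_proj_add_outer_le:
  assumes "finite S"
  shows "vec_space.rank n (diag_proj n S + outer_mat n x) \<le> card S + 1"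
proof -
  have "vec_space.rank n (outer_mat n x) \<le> 1"
    by (rule vec_space.rank_le_1_product_entries[of _ n n x "\<lambda>c. cnj (x c)"]) (auto simp: outer_mat_def)
  then show ?thesis
    using vec_space.rank_subadditive[of "diag_proj n S" n n "outer_mat n x"] rank_diag_proj_le[OF assms, of n]
    by simp
qed

lemma sum_two_point_vec:
  assumes "p < n" "q < n" "p \<noteq> q"
  shows "(\<Sum>j<n. f j * two_point_vec p q a b j) = f p * a + f q * b"
proof -
  have "(\<Sum>j<n. f j * two_point_vec p q a b j)
      = (\<Sum>j<n. (if j = p then f j * a else 0) + (if j = q then f j * b else 0))"
    using assms by (intro sum.cong refl) (auto simp: two_point_vec_def)
  also have "\<dots> = f p * a + f q * b" using assms by (simp add: sum.distrib)
  finally show ?thesis .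
qed

lemma cnj_two_point_vec: "cnj (two_point_vec p q a b i) = two_point_vec p q (cnj a) (cnj b) i"
  unfolding two_point_vec_def by auto

lemma two_point_vec_outer_complement:
  assumes "p \<noteq> q" "a * cnj a + b * cnj b = 1"
  shows "two_point_vec p q a b i * cnj (two_point_vec p q a b j)
      + two_point_vec p q (- cnj b) (cnj a) i * cnj (two_point_vec p q (- cnj b) (cnj a) j)
    = (if i = j \<and> i \<in> {p,q} then 1 else 0)"
  unfolding two_point_vec_def using assms
  by (cases "i = p"; cases "i = q"; cases "j = p"; cases "j = q") (simp_all add: mult.commute add.commute)

locale two_point_update =
  fixes n :: nat and S :: "nat set" and p q :: nat and a b :: complex
  assumes S: "S \<subseteq> {..<n}" and p: "p < n" and q: "q < n" and pq: "p \<noteq> q"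
    and pS: "p \<notin> S" and qS: "q \<notin> S" and unit: "a * cnj a + b * cnj b = 1"
begin

abbreviation "x \<equiv> two_point_vec p q a b"

definition "P = diag_proj n S + outer_mat n x"

lemma P_carrier [simp]: "P \<in> carrier_mat n n"
  unfolding P_def by simp

lemma dim_P [simp]: "dim_row P = n" "dim_col P = n"
  by (simp_all add: P_def diag_proj_def outer_mat_def)

lemma index_P: "i < n \<Longrightarrow> j < n \<Longrightarrow> P $$ (i,j) = (if i = j \<and> i \<in> S then 1 else 0) + x i * cnj (x j)"
  unfolding P_def diag_proj_def outer_mat_def by simp

lemma x_vanishes_on_S: "i \<in> S \<Longrightarrow> x i = 0"
  using pS qS unfolding two_point_vec_def by auto

lemma x_unit: "(\<Sum>j<n. cnj (x j) * x j) = 1"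
  using sum_two_point_vec[OF p q pq, of "\<lambda>j. cnj (x j)" a b] p q pq unit
  by (simp add: two_point_vec_def mult.commute)

lemma orth_proj_P: "orth_proj n P"
proof -
  have "mat_adjoint P = P"
    by (rule eq_matI) (auto simp: index_mat_adjoint[OF P_carrier] index_P mult.commute)
  moreover have "P * P = P"
  proof (rule eq_matI)
    fix i l assume "i < dim_row P" "l < dim_col P"
    then have il: "i < n" "l < n" by auto
    let ?d = "\<lambda>i j. (if i = j \<and> i \<in> S then 1 else 0 :: complex)"
    have "(P * P) $$ (i,l) = (\<Sum>j<n. ?d i j * ?d j l + ?d i j * (x j * cnj (x l))
        + (x i * cnj (x j)) * ?d j l + x i * cnj (x l) * (cnj (x j) * x j))"
      using il by (simp add: index_mult_mat_sum[OF P_carrier P_carrier il] index_P algebra_simps)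
    also have "\<dots> = ?d i l + x i * cnj (x l) * (\<Sum>j<n. cnj (x j) * x j)"
    proof -
      have "(\<Sum>j<n. ?d i j * ?d j l + ?d i j * (x j * cnj (x l)) + (x i * cnj (x j)) * ?d j l)
          = (\<Sum>j<n. if j = i then ?d i l else 0)"
        using x_vanishes_on_S by (intro sum.cong) auto
      then show ?thesis using il by (simp add: sum.distrib sum_distrib_left)
    qed
    finally show "(P * P) $$ (i,l) = P $$ (i,l)" using il by (simp add: index_P x_unit)
  qed auto
  ultimately show ?thesis unfolding orth_proj_def by simp
qed

lemma mtrace_P: "mtrace P = of_nat (card S + 1)"
proof -
  have "mtrace P = (\<Sum>i<n. (if i \<in> S then 1 else 0) + cnj (x i) * x i)"
    by (simp add: mtrace_carrier[OF P_carrier] index_P mult.commute)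
  also have "\<dots> = of_nat (card S) + 1"
    using S by (simp add: sum.distrib x_unit sum.If_cases Int_absorb1)
  finally show ?thesis by simp
qed

lemma mtrace_mult_P:
  assumes A: "A \<in> carrier_mat n n"
  shows "mtrace (A * P) = (\<Sum>s\<in>S. A $$ (s,s)) +
     (cnj a * (A $$ (p,p) * a + A $$ (p,q) * b) + cnj b * (A $$ (q,p) * a + A $$ (q,q) * b))"
proof -
  let ?d = "\<lambda>i j. (if i = j \<and> i \<in> S then 1 else 0 :: complex)"
  have "mtrace (A * P) = (\<Sum>i<n. \<Sum>j<n. A $$ (i,j) * ?d j i)
      + (\<Sum>i<n. cnj (x i) * (\<Sum>j<n. A $$ (i,j) * x j))"
    unfolding mtrace_mult[OF A P_carrier]
    by (simp add: index_P algebra_simps sum.distrib sum_distrib_left)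
  also have "(\<Sum>i<n. \<Sum>j<n. A $$ (i,j) * ?d j i) = (\<Sum>i<n. if i \<in> S then A $$ (i,i) else 0)"
  proof (intro sum.cong refl)
    fix i assume "i \<in> {..<n}"
    have "(\<Sum>j<n. A $$ (i,j) * ?d j i) = (\<Sum>j<n. if j = i then (if i \<in> S then A $$ (i,i) else 0) else 0)"
      by (intro sum.cong) auto
    then show "(\<Sum>j<n. A $$ (i,j) * ?d j i) = (if i \<in> S then A $$ (i,i) else 0)"
      using \<open>i \<in> {..<n}\<close> by simp
  qed
  also have "\<dots> = (\<Sum>s\<in>S. A $$ (s,s))"
    using S by (simp add: sum.If_cases Int_absorb1)
  also have "(\<Sum>i<n. cnj (x i) * (\<Sum>j<n. A $$ (i,j) * x j))
      = (\<Sum>i<n. (A $$ (i,p) * a + A $$ (i,q) * b) * two_point_vec p q (cnj a) (cnj b) i)"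
    by (intro sum.cong refl) (simp add: sum_two_point_vec[OF p q pq] cnj_two_point_vec mult.commute)
  also have "\<dots> = cnj a * (A $$ (p,p) * a + A $$ (p,q) * b) + cnj b * (A $$ (q,p) * a + A $$ (q,q) * b)"
    by (subst sum_two_point_vec[OF p q pq]) (simp add: algebra_simps)
  finally show ?thesis .
qed

text \<open>\<open>1\<^sub>m n = P + P'\<close>, where \<open>P'\<close> has the same shape for the complementary index set and the
  orthogonal unit vector \<open>(-b\<^sup>*, a\<^sup>*)\<close>; subadditivity of the rank then forces \<open>rank P \<ge> card S + 1\<close>.\<close>

lemma rank_P: "vec_space.rank n P = card S + 1"
proof -
  define T where "T = {..<n} - (S \<union> {p,q})"
  interpret complement: two_point_update n T p q "- cnj b" "cnj a"
    using p q pq unit by unfold_locales (auto simp: T_def algebra_simps)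
  have finS: "finite S" using S finite_subset by blast
  have sub: "S \<union> {p,q} \<subseteq> {..<n}" using S p q by auto
  have card: "card (S \<union> {p,q}) = card S + 2" using finS pS qS pq by simp
  then have "card T = n - (card S + 2)" "card S + 2 \<le> n"
    using card_Diff_subset[OF finite_subset[OF sub] sub] card_mono[OF _ sub] by (auto simp: T_def)
  moreover have identity: "1\<^sub>m n = P + complement.P"
  proof (rule eq_matI)
    fix i j assume "i < dim_row (P + complement.P)" "j < dim_col (P + complement.P)"
    then have ij: "i < n" "j < n" by auto
    have outer: "x i * cnj (x j) + complement.x i * cnj (complement.x j)
        = (if i = j \<and> i \<in> {p,q} then 1 else 0)"
      by (rule two_point_vec_outer_complement[OF pq unit])
    have "P $$ (i, j) + complement.P $$ (i, j) = (if i = j \<and> i \<in> S then 1 else 0)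
        + (if i = j \<and> i \<in> T then 1 else 0) + (x i * cnj (x j) + complement.x i * cnj (complement.x j))"
      unfolding index_P[OF ij] complement.index_P[OF ij] by (simp only: add_ac)
    also have "\<dots> = 1\<^sub>m n $$ (i, j)"
      unfolding outer using ij pS qS by (auto simp: T_def)
    finally have "1\<^sub>m n $$ (i, j) = P $$ (i, j) + complement.P $$ (i, j)" ..
    then show "1\<^sub>m n $$ (i, j) = (P + complement.P) $$ (i, j)" using ij by simp
  qed auto
  have "vec_space.rank n (1\<^sub>m n :: complex mat) = n"
    using vec_space.det_rank_iff[of "1\<^sub>m n :: complex mat" n] by simp
  then have "n \<le> vec_space.rank n P + vec_space.rank n complement.P"
    using vec_space.rank_subadditive[OF P_carrier complement.P_carrier] unfolding identity by simp
  moreover have "vec_space.rank n complement.P \<le> card T + 1"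
    unfolding complement.P_def by (rule rank_diag_proj_add_outer_le) (simp add: T_def)
  moreover have "vec_space.rank n P \<le> card S + 1"
    unfolding P_def by (rule rank_diag_proj_add_outer_le[OF finS])
  ultimately show ?thesis by linarith
qed

end

section \<open>Quadratic forms of constant modulus on the unit sphere of \<open>\<complex>\<^sup>2\<close>\<close>

lemma cmod_add_square_add_cmod_diff_square:
  fixes m v :: complex
  shows "(cmod (m + v))^2 + (cmod (m - v))^2 = 2 * ((cmod m)^2 + (cmod v)^2)"
  unfolding cmod_power2 by (simp add: power2_eq_square algebra_simps)

lemma cmod_real_combination_square:
  fixes u s :: complex and x y :: real
  shows "(cmod (of_real x * u + of_real y * s))^2
    = x^2 * (cmod u)^2 + y^2 * (cmod s)^2 + 2 * x * y * Re (cnj u * s)"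
  unfolding cmod_power2 by (simp add: power2_eq_square algebra_simps)

lemma complex_orthogonal_triple_zero:
  fixes u s t :: complex
  assumes us: "Re (cnj u * s) = 0" and ut: "Re (cnj u * t) = 0" and st: "Re (cnj s * t) = 0"
    and "cmod s = cmod u" "cmod t = cmod u"
  shows "u = 0"
proof -
  define D where "D = Re s * Im t - Im s * Re t"
  have re: "Re u * Re s = - (Im u * Im s)" "Re u * Re t = - (Im u * Im t)"
    using us ut by (simp_all add: algebra_simps)
  have "Re u * D = Im t * (Re u * Re s) - Im s * (Re u * Re t)"
    unfolding D_def by (simp add: algebra_simps)
  also have "\<dots> = 0" unfolding re by (simp add: algebra_simps)
  finally have "Re u * D = 0" .
  have im: "Im u * Im s = - (Re u * Re s)" "Im u * Im t = - (Re u * Re t)"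
    using us ut by (simp_all add: algebra_simps)
  have "Im u * D = Re s * (Im u * Im t) - Re t * (Im u * Im s)"
    unfolding D_def by (simp add: algebra_simps)
  also have "\<dots> = 0" unfolding im by (simp add: algebra_simps)
  finally have "Im u * D = 0" .
  note \<open>Re u * D = 0\<close> this
  moreover have "(cmod s)^2 * (cmod t)^2 = D^2 + (Re (cnj s * t))^2"
    unfolding cmod_power2 D_def by (simp add: power2_eq_square algebra_simps)
  moreover have "(cmod u)^2 * D^2 = (Re u * D)^2 + (Im u * D)^2"
    unfolding cmod_power2 by (simp add: power2_eq_square algebra_simps)
  ultimately have "(cmod u)^2 * ((cmod u)^2 * (cmod u)^2) = 0"
    using st assms(4,5) by (simp add: power2_eq_square)
  then show ?thesis by simp
qed

lemma affine_norm_const_on_sphere: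
  fixes m u s t :: complex
  assumes const: "\<And>x y z. x^2 + y^2 + z^2 = 1 \<Longrightarrow>
      cmod (m + (of_real x * u + of_real y * s + of_real z * t)) = w"
  shows "u = 0 \<and> s = 0 \<and> t = 0"
proof -
  define \<rho> where "\<rho> = w^2 - (cmod m)^2"
  have sphere: "(cmod (of_real x * u + of_real y * s + of_real z * t))^2 = \<rho>"
    if "x^2 + y^2 + z^2 = 1" for x y z
  proof -
    define v where "v = of_real x * u + of_real y * s + of_real z * t"
    have "cmod (m - v) = w"
      using const[of "- x" "- y" "- z"] that unfolding v_def by (simp add: algebra_simps)
    moreover have "cmod (m + v) = w" using const[OF that] unfolding v_def by (simp add: add.assoc)
    ultimately have "w^2 + w^2 = 2 * ((cmod m)^2 + (cmod v)^2)"
      using cmod_add_square_add_cmod_diff_square[of m v] by simp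
    then show ?thesis unfolding \<rho>_def v_def[symmetric] by simp
  qed
  have norms: "(cmod u)^2 = \<rho>" "(cmod s)^2 = \<rho>" "(cmod t)^2 = \<rho>"
    using sphere[of 1 0 0] sphere[of 0 1 0] sphere[of 0 0 1] by simp_all
  have "(cmod (of_real (3/5) * u + of_real (4/5) * s))^2 = \<rho>"
       "(cmod (of_real (3/5) * u + of_real (4/5) * t))^2 = \<rho>"
       "(cmod (of_real (3/5) * s + of_real (4/5) * t))^2 = \<rho>"
    using sphere[of "3/5" "4/5" 0] sphere[of "3/5" 0 "4/5"] sphere[of 0 "3/5" "4/5"]
    by (simp_all add: power2_eq_square)
  then have "Re (cnj u * s) = 0" "Re (cnj u * t) = 0" "Re (cnj s * t) = 0"
    unfolding cmod_real_combination_square norms by (simp_all add: power2_eq_square)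
  then have "u = 0"
    using norms power2_eq_imp_eq[of "cmod s" "cmod u"] power2_eq_imp_eq[of "cmod t" "cmod u"]
    by (intro complex_orthogonal_triple_zero[of u s t]) simp_all
  then show ?thesis using norms by simp
qed

lemma quadratic_form2_bloch:
  fixes a b \<alpha> \<beta> \<beta>' \<delta> :: complex
  assumes unit: "a * cnj a + b * cnj b = 1"
  shows "cnj a * (\<alpha> * a + \<beta> * b) + cnj b * (\<beta>' * a + \<delta> * b)
    = (\<alpha> + \<delta>) / 2 + (of_real ((cmod a)^2 - (cmod b)^2) * ((\<alpha> - \<delta>) / 2)
        + of_real (2 * Re (cnj a * b)) * ((\<beta> + \<beta>') / 2)
        + of_real (2 * Im (cnj a * b)) * (\<i> * (\<beta> - \<beta>') / 2))"
proof -
  have re: "of_real (2 * Re (cnj a * b)) = cnj a * b + a * cnj b"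
    using complex_add_cnj[of "cnj a * b"] by (simp add: mult.commute)
  have im: "of_real (2 * Im (cnj a * b)) = - \<i> * (cnj a * b - a * cnj b)"
    using complex_diff_cnj[of "cnj a * b"] by (simp add: mult.commute)
  have norms: "of_real ((cmod a)^2 - (cmod b)^2) = a * cnj a - b * cnj b"
    by (simp only: of_real_diff complex_norm_square)
  have "cnj a * (\<alpha> * a + \<beta> * b) + cnj b * (\<beta>' * a + \<delta> * b)
    = (\<alpha> + \<delta>) / 2 * (a * cnj a + b * cnj b) + ((a * cnj a - b * cnj b) * ((\<alpha> - \<delta>) / 2)
        + (cnj a * b + a * cnj b) * ((\<beta> + \<beta>') / 2)
        + (- \<i> * (cnj a * b - a * cnj b)) * (\<i> * (\<beta> - \<beta>') / 2))"
    by (simp add: field_simps)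
  then show ?thesis unfolding re im norms unit by simp
qed

lemma bloch_sphere_surj:
  fixes x y z :: real
  assumes "x^2 + y^2 + z^2 = 1"
  obtains a b :: complex where "a * cnj a + b * cnj b = 1" "(cmod a)^2 - (cmod b)^2 = x"
    "2 * Re (cnj a * b) = y" "2 * Im (cnj a * b) = z"
proof (cases "x = -1")
  case True
  then have "y^2 + z^2 = 0" using assms by simp
  then have "y = 0" "z = 0" by (simp_all add: sum_squares_eq_zero_iff)
  then show ?thesis using that[of 0 1] True by simp
next
  case False
  have "x^2 \<le> 1" using assms zero_le_power2[of y] zero_le_power2[of z] by linarith
  then have x: "-1 < x" using False abs_square_le_1[of x] by auto
  define r where "r = sqrt ((1 + x) / 2)"
  have r: "0 < r" "r^2 = (1 + x) / 2" using x by (simp_all add: r_def)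
  define b where "b = (of_real y + \<i> * of_real z) / of_real (2 * r)"
  have ab: "cnj (of_real r) * b = of_real (y / 2) + \<i> * of_real (z / 2)"
    using r(1) by (simp add: b_def field_simps)
  have "(cmod b)^2 = (y^2 + z^2) / (4 * r^2)"
    using r(1) by (simp add: b_def norm_divide power_divide cmod_power2 power_mult_distrib)
  also have "y^2 + z^2 = (1 - x) * (1 + x)"
    using assms by (simp add: algebra_simps power2_eq_square)
  also have "(1 - x) * (1 + x) / (4 * r^2) = (1 - x) / 2"
    using x unfolding r(2) by (simp add: field_simps)
  finally have b2: "(cmod b)^2 = (1 - x) / 2" .
  show ?thesis
  proof (rule that[of "of_real r" b])
    have "of_real r * cnj (of_real r) + b * cnj b = of_real (r^2 + (cmod b)^2)"
      by (simp add: complex_norm_square[symmetric] power2_eq_square)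
    also have "r^2 + (cmod b)^2 = 1" unfolding r(2) b2 by (simp add: field_simps)
    finally show "of_real r * cnj (of_real r) + b * cnj b = 1" by simp
    show "(cmod (of_real r))^2 - (cmod b)^2 = x" using r(1,2) b2 by simp
    show "2 * Re (cnj (of_real r) * b) = y" "2 * Im (cnj (of_real r) * b) = z" unfolding ab by simp_all
  qed
qed

lemma quadratic_form2_const_norm_imp_scalar:
  fixes c \<alpha> \<beta> \<beta>' \<delta> :: complex and w :: real
  assumes const: "\<And>a b. a * cnj a + b * cnj b = 1 \<Longrightarrow>
      cmod (c + (cnj a * (\<alpha> * a + \<beta> * b) + cnj b * (\<beta>' * a + \<delta> * b))) = w"
  shows "\<alpha> = \<delta> \<and> \<beta> = 0 \<and> \<beta>' = 0"
proof -
  have zero: "(\<alpha> - \<delta>) / 2 = 0 \<and> (\<beta> + \<beta>') / 2 = 0 \<and> \<i> * (\<beta> - \<beta>') / 2 = 0"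
  proof (rule affine_norm_const_on_sphere[where m = "c + (\<alpha> + \<delta>) / 2"])
    fix x y z :: real assume "x^2 + y^2 + z^2 = 1"
    then obtain a b where unit: "a * cnj a + b * cnj b = 1" and "(cmod a)^2 - (cmod b)^2 = x"
      "2 * Re (cnj a * b) = y" "2 * Im (cnj a * b) = z"
      by (rule bloch_sphere_surj)
    then show "cmod (c + (\<alpha> + \<delta>) / 2 + (of_real x * ((\<alpha> - \<delta>) / 2) + of_real y * ((\<beta> + \<beta>') / 2)
        + of_real z * (\<i> * (\<beta> - \<beta>') / 2))) = w"
      using const[OF unit] quadratic_form2_bloch[OF unit, of \<alpha> \<beta> \<beta>' \<delta>] by (simp add: add.assoc)
  qed
  then have sum: "\<beta> + \<beta>' = 0" and diff: "\<beta> = \<beta>'"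
    by (metis divide_eq_0_iff mult_eq_0_iff complex_i_not_zero zero_neq_numeral eq_iff_diff_eq_0)+
  have "2 * \<beta>' = 0" using sum unfolding diff mult_2 .
  then show ?thesis using zero diff by simp
qed

section \<open>Matrices parallel to all rank-\<open>k\<close> projections\<close>

lemma obtain_subset_avoiding_two:
  assumes "1 \<le> k" "k < n" "p < n" "q < n" "p \<noteq> q"
  obtains S where "S \<subseteq> {..<n}" "p \<notin> S" "q \<notin> S" "card S = k - 1"
proof -
  have "k - 1 \<le> card ({..<n} - {p,q})" using assms by (simp add: card_Diff_subset)
  then obtain S where "S \<subseteq> {..<n} - {p,q}" "card S = k - 1"
    by (rule obtain_subset_with_card_n)
  then show ?thesis using that by blast
qed

lemma smult_one_if_parallel_rank_orth_projs:
  assumes k: "1 \<le> k" "k < n" and A: "A \<in> carrier_mat n n"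
    and par: "\<And>P. orth_proj n P \<Longrightarrow> vec_space.rank n P = k \<Longrightarrow> wk_parallel n k A P"
  shows "A = A $$ (0,0) \<cdot>\<^sub>m 1\<^sub>m n"
proof -
  have entries: "A $$ (p,p) = A $$ (q,q) \<and> A $$ (p,q) = 0 \<and> A $$ (q,p) = 0"
    if pq: "p < n" "q < n" "p \<noteq> q" for p q
  proof -
    obtain S where hS: "S \<subseteq> {..<n}" "p \<notin> S" "q \<notin> S" "card S = k - 1"
      using obtain_subset_avoiding_two[OF k pq] .
    show ?thesis
    proof (rule quadratic_form2_const_norm_imp_scalar[where c = "\<Sum>s\<in>S. A $$ (s,s)" and w = "wk n k A"])
      fix a b :: complex assume "a * cnj a + b * cnj b = 1"
      then interpret two_point_update n S p q a b
        using hS pq by unfold_locales auto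
      have card: "card S + 1 = k" using hS(4) k by simp
      have "mtrace P = of_nat k" "vec_space.rank n P = k"
        unfolding card[symmetric] by (rule mtrace_P, rule rank_P)
      then have "cmod (mtrace (A * P)) = wk n k A"
        using norm_mtrace_eq_wk_if_parallel_orth_proj[OF _ A orth_proj_P _ par[OF orth_proj_P]] k by simp
      then show "cmod ((\<Sum>s\<in>S. A $$ (s,s)) + (cnj a * (A $$ (p,p) * a + A $$ (p,q) * b)
          + cnj b * (A $$ (q,p) * a + A $$ (q,q) * b))) = wk n k A"
        using mtrace_mult_P[OF A] by simp
    qed
  qed
  show ?thesis
  proof (rule eq_matI)
    fix i j assume "i < dim_row (A $$ (0,0) \<cdot>\<^sub>m 1\<^sub>m n)" "j < dim_col (A $$ (0,0) \<cdot>\<^sub>m 1\<^sub>m n)"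
    then have ij: "i < n" "j < n" by auto
    show "A $$ (i, j) = (A $$ (0,0) \<cdot>\<^sub>m 1\<^sub>m n) $$ (i, j)"
    proof (cases "i = j")
      case True
      have "A $$ (i,i) = A $$ (0,0)" using entries[of 0 i] ij by (cases "i = 0") auto
      then show ?thesis using True ij by simp
    next
      case False
      then show ?thesis using entries[of i j] ij by simp
    qed
  qed (use A in auto)
qed

theorem mainTheorem6:
  fixes n k :: nat and A :: "complex mat"
  assumes "1 \<le> k" and "k < n" and "A \<in> carrier_mat n n"
  shows "((\<exists>\<gamma>::complex. A = \<gamma> \<cdot>\<^sub>m 1\<^sub>m n) \<longleftrightarrow>
            (\<forall>B \<in> carrier_mat n n. wk_parallel n k A B))
       \<and> ((\<forall>B \<in> carrier_mat n n. wk_parallel n k A B) \<longleftrightarrow>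
            (\<forall>P. orth_proj n P \<and> vec_space.rank n P = k \<longrightarrow> wk_parallel n k A P))"
proof -
  have a_b: "\<forall>B \<in> carrier_mat n n. wk_parallel n k A B" if "\<exists>\<gamma>. A = \<gamma> \<cdot>\<^sub>m 1\<^sub>m n"
    using that wk_parallel_smult_one assms(2) by auto
  have b_c: "\<forall>P. orth_proj n P \<and> vec_space.rank n P = k \<longrightarrow> wk_parallel n k A P"
    if "\<forall>B \<in> carrier_mat n n. wk_parallel n k A B"
    using that by (auto simp: orth_proj_def)
  have c_a: "\<exists>\<gamma>. A = \<gamma> \<cdot>\<^sub>m 1\<^sub>m n"
    if "\<forall>P. orth_proj n P \<and> vec_space.rank n P = k \<longrightarrow> wk_parallel n k A P"
    using smult_one_if_parallel_rank_orth_projs[OF assms] that by blast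
  show ?thesis using a_b b_c c_a by blast
qed

end
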